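(* Let $G=(V,E)$ be an undirected multigraph, $0\le\delta\le 1/3$, and $A\subseteq V$. Let $S\subseteq V$ cross $A$, i.e. $S\cap A\ne\emptyset$ and $A\setminus S\neq\emptyset$. Suppose $S\cap A$ is not $(1-\delta)$-boundary sparse in $A$. Let $X\in\{S\cap A,\,A\setminus S\}$ satisfy $w(X,V\setminus A)=\min\{w(S\cap A,V\setminus A),w(A\setminus S,V\setminus A)\}$. Define $S'=S\setminus A$ if $X=S\cap A$, and $S'=S\cup A$ if $X=A\setminus S$. Then $$w(S',V\setminus S')\le(1+\tfrac{3\delta}{2})\,w(S,V\setminus S).$$
   Context: $w(P,Q)$ is the number of edges (with multiplicity) with one endpoint in $P$ and the other in $Q$, for disjoint $P,Q$. For $C\subseteq V$ and $\delta\le1$, a set $U\subsetneq C$ is $(1-\delta)$-boundary sparse in $C$ if $w(U,C\setminus U)<(1-\delta)\min\{w(U,V\setminus C),\,w(C\setminus U,V\setminus C)\}$. *)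

theory Defs
  imports Complex_Main
begin

text \<open>An undirected multigraph with vertex set V, finite edge index set E and
  endpoint map ends. Parallel edges are distinct elements of E.\<close>

definition multigraph :: "'v set \<Rightarrow> 'e set \<Rightarrow> ('e \<Rightarrow> 'v \<times> 'v) \<Rightarrow> bool" where
  "multigraph V E ends \<longleftrightarrow> finite V \<and> finite E \<and>
     (\<forall>e\<in>E. fst (ends e) \<in> V \<and> snd (ends e) \<in> V)"

definition w :: "'e set \<Rightarrow> ('e \<Rightarrow> 'v \<times> 'v) \<Rightarrow> 'v set \<Rightarrow> 'v set \<Rightarrow> nat" where
  "w E ends P Q = card {e\<in>E. (fst (ends e) \<in> P \<and> snd (ends e) \<in> Q) \<or>
                              (fst (ends e) \<in> Q \<and> snd (ends e) \<in> P)}"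

definition boundary_sparse ::
  "'v set \<Rightarrow> 'e set \<Rightarrow> ('e \<Rightarrow> 'v \<times> 'v) \<Rightarrow> real \<Rightarrow> 'v set \<Rightarrow> 'v set \<Rightarrow> bool" where
  "boundary_sparse V E ends \<delta> C U \<longleftrightarrow> U \<subset> C \<and>
     real (w E ends U (C - U)) <
       (1 - \<delta>) * real (min (w E ends U (V - C)) (w E ends (C - U) (V - C)))"

end

theory Submission
  imports Defs
begin

text \<open>Moving \<open>S \<inter> A\<close> out of \<open>S\<close> removes its edges to \<open>V - S\<close> from the cut,
  among them the \<open>w(S \<inter> A, A - S)\<close> edges inside \<open>A\<close>, and adds its edges to \<open>S - A\<close>.
  These lie among its edges to \<open>V - A\<close>, which by non-sparseness number at most
  \<open>1/(1 - \<delta>) \<le> 1 + 3\<delta>/2\<close> times \<open>w(S \<inter> A, A - S)\<close>. So the cut grows by at most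
  \<open>3\<delta>/2 \<cdot> w(S \<inter> A, A - S)\<close>, a part of the old cut. Moving \<open>A - S\<close> into \<open>S\<close> is the same
  operation applied to \<open>V - S\<close>.\<close>

lemma w_sym: "w E ends P Q = w E ends Q P"
  unfolding w_def by (rule arg_cong[where f = card]) blast

lemma w_mono:
  assumes "finite E" "P \<subseteq> P'" "Q \<subseteq> Q'"
  shows "w E ends P Q \<le> w E ends P' Q'"
  unfolding w_def using assms by (intro card_mono) auto

lemma w_Un_right:
  assumes "finite E" "P \<inter> Q1 = {}" "Q1 \<inter> Q2 = {}"
  shows "w E ends P (Q1 \<union> Q2) = w E ends P Q1 + w E ends P Q2"
proof -
  let ?edges = "\<lambda>Q. {e\<in>E. (fst (ends e) \<in> P \<and> snd (ends e) \<in> Q) \<or>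
                          (fst (ends e) \<in> Q \<and> snd (ends e) \<in> P)}"
  have "?edges (Q1 \<union> Q2) = ?edges Q1 \<union> ?edges Q2" by blast
  moreover have "?edges Q1 \<inter> ?edges Q2 = {}" using assms by blast
  ultimately show ?thesis
    unfolding w_def using assms(1) by (simp add: card_Un_disjoint)
qed

lemma one_le_one_plus_three_halves_times_one_minus:
  fixes \<delta> :: real
  assumes "0 \<le> \<delta>" "\<delta> \<le> 1/3"
  shows "1 \<le> (1 + 3 * \<delta> / 2) * (1 - \<delta>)"
proof -
  have "(1 + 3 * \<delta> / 2) * (1 - \<delta>) = 1 + \<delta> * (1 - 3 * \<delta>) / 2"
    by (simp add: field_simps)
  moreover have "0 \<le> \<delta> * (1 - 3 * \<delta>)" using assms by simp
  ultimately show ?thesis by simp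
qed

lemma cut_diff_eq:
  assumes "finite E" "S \<subseteq> V"
  shows "w E ends (S - A) (V - (S - A)) + w E ends (S \<inter> A) (V - S)
           = w E ends (S \<inter> A) (S - A) + w E ends S (V - S)"
proof -
  have "V - (S - A) = (S \<inter> A) \<union> (V - S)" using assms(2) by blast
  then have diff: "w E ends (S - A) (V - (S - A))
                     = w E ends (S - A) (S \<inter> A) + w E ends (S - A) (V - S)"
    using assms(1) by (subst w_Un_right[symmetric]) auto
  have "w E ends S (V - S) = w E ends (V - S) ((S \<inter> A) \<union> (S - A))"
    by (simp add: w_sym Int_Diff_Un)
  also have "\<dots> = w E ends (S \<inter> A) (V - S) + w E ends (S - A) (V - S)"
    using assms(1) by (subst w_Un_right) (auto simp: w_sym)
  finally show ?thesis using diff by (simp add: w_sym)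
qed

lemma cut_diff_le:
  assumes "finite E" "A \<subseteq> V" "S \<subseteq> V" "0 \<le> \<delta>" "\<delta> \<le> 1/3"
    and dense: "(1 - \<delta>) * real (w E ends (S \<inter> A) (V - A)) \<le> real (w E ends (S \<inter> A) (A - S))"
  shows "real (w E ends (S - A) (V - (S - A))) \<le> (1 + 3 * \<delta> / 2) * real (w E ends S (V - S))"
proof -
  let ?inner = "real (w E ends (S \<inter> A) (A - S))"
  let ?cut = "real (w E ends S (V - S))"
  have "real (w E ends (S \<inter> A) (S - A)) \<le> real (w E ends (S \<inter> A) (V - A))"
    using assms(1,3) by (simp add: w_mono Diff_mono)
  also have "\<dots> \<le> (1 + 3 * \<delta> / 2) * (1 - \<delta>) * real (w E ends (S \<inter> A) (V - A))"
    using mult_right_mono[OF one_le_one_plus_three_halves_times_one_minus[OF assms(4,5)],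
        of "real (w E ends (S \<inter> A) (V - A))"]
    by simp
  also have "\<dots> \<le> (1 + 3 * \<delta> / 2) * ?inner"
    using dense assms(4) by (simp add: mult.assoc mult_left_mono)
  finally have gain: "real (w E ends (S \<inter> A) (S - A)) \<le> (1 + 3 * \<delta> / 2) * ?inner" .
  have loss: "?inner \<le> real (w E ends (S \<inter> A) (V - S))"
    using assms(1,2) by (simp add: w_mono Diff_mono)
  have "?inner \<le> ?cut"
    using loss w_mono[OF assms(1), of "S \<inter> A" S "V - S" "V - S" ends] by simp
  then have "3 * \<delta> / 2 * ?inner \<le> 3 * \<delta> / 2 * ?cut"
    using assms(4) by (simp add: mult_left_mono)
  moreover have "real (w E ends (S - A) (V - (S - A))) + real (w E ends (S \<inter> A) (V - S))
                   = real (w E ends (S \<inter> A) (S - A)) + ?cut"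
    using cut_diff_eq[OF assms(1,3), where A = A and ends = ends] by linarith
  ultimately show ?thesis using gain loss by (simp add: algebra_simps)
qed

lemma cut_union_le:
  assumes "finite E" "A \<subseteq> V" "S \<subseteq> V" "0 \<le> \<delta>" "\<delta> \<le> 1/3"
    and dense: "(1 - \<delta>) * real (w E ends (A - S) (V - A)) \<le> real (w E ends (A - S) (S \<inter> A))"
  shows "real (w E ends (S \<union> A) (V - (S \<union> A))) \<le> (1 + 3 * \<delta> / 2) * real (w E ends S (V - S))"
proof -
  have "(V - S) \<inter> A = A - S" "A - (V - S) = S \<inter> A" "(V - S) - A = V - (S \<union> A)"
    "V - (V - (S \<union> A)) = S \<union> A" "V - (V - S) = S"
    using assms(2,3) by auto
  then show ?thesis
    using cut_diff_le[where S = "V - S" and A = A and ends = ends, OF assms(1,2) Diff_subset assms(4,5)] dense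
    by (simp add: w_sym)
qed

theorem mainTheorem8:
  fixes V :: "'v set" and E :: "'e set" and ends :: "'e \<Rightarrow> 'v \<times> 'v"
    and \<delta> :: real and A S X :: "'v set"
  assumes G: "multigraph V E ends"
    and d0: "0 \<le> \<delta>" and d1: "\<delta> \<le> 1/3"
    and AV: "A \<subseteq> V" and SV: "S \<subseteq> V"
    and cross1: "S \<inter> A \<noteq> {}" and cross2: "A - S \<noteq> {}"
    and notsparse: "\<not> boundary_sparse V E ends \<delta> A (S \<inter> A)"
    and Xchoice: "X \<in> {S \<inter> A, A - S}"
    and Xmin: "w E ends X (V - A) =
                 min (w E ends (S \<inter> A) (V - A)) (w E ends (A - S) (V - A))"
  shows "real (w E ends (if X = S \<inter> A then S - A else S \<union> A)
                        (V - (if X = S \<inter> A then S - A else S \<union> A)))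
           \<le> (1 + 3 * \<delta> / 2) * real (w E ends S (V - S))"
proof -
  have fin: "finite E" using G by (simp add: multigraph_def)
  have "S \<inter> A \<subset> A" "A - S \<inter> A = A - S" using cross2 by auto
  then have dense: "(1 - \<delta>) * real (w E ends X (V - A)) \<le> real (w E ends (S \<inter> A) (A - S))"
    using notsparse Xmin by (simp add: boundary_sparse_def)
  show ?thesis
  proof (cases "X = S \<inter> A")
    case True
    then show ?thesis using cut_diff_le[OF fin AV SV d0 d1] dense by simp
  next
    case False
    then have "X = A - S" using Xchoice by simp
    then show ?thesis
      using False cut_union_le[OF fin AV SV d0 d1] dense by (simp add: w_sym)
  qed
qed

end
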